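(* A metric space $X$ has asymptotic property $C$ if and only if $\operatorname{trasdim} X<\infty$.
   Context: A family $\mathcal A$ of subsets of a metric space is uniformly bounded if there is $C>0$ with $\operatorname{diam}A\le C$ for all $A\in\mathcal A$; it is $r$-disjoint if $d(A_1,A_2)\ge r$ for all distinct $A_1,A_2\in\mathcal A$. For a set $L$, $\mathrm{Fin}\,L$ is the collection of finite nonempty subsets of $L$. For $M\subset \mathrm{Fin}\,L$ and $\sigma\in\{\emptyset\}\cup\mathrm{Fin}\,L$, $M^\sigma=\{\tau\in\mathrm{Fin}\,L:\sigma\cup\tau\in M,\ \sigma\cap\tau=\emptyset\}$, and $M^a=M^{\{a\}}$. The ordinal $\operatorname{Ord}M$ is defined inductively: $\operatorname{Ord}M=0$ iff $M=\emptyset$; $\operatorname{Ord}M\le\alpha$ iff $\operatorname{Ord}M^a<\alpha$ for every $a\in L$; $\operatorname{Ord}M=\alpha$ iff $\operatorname{Ord}M\le\alpha$ and not $\operatorname{Ord}M<\alpha$; $\operatorname{Ord}M=\infty$ iff $\operatorname{Ord} M\le\alpha$ for no ordinal $\alpha$. For a metric space $(X,d)$, $A(X,d)$ is the set of $\sigma\in\mathrm{Fin}\,\mathbb N$ such that there do NOT exist uniformly bounded families $\mathcal V_i$, $i\in\sigma$, with $\bigcup_{i\in\sigma}\mathcal V_i$ covering $X$ and each $\mathcal V_i$ being $i$-disjoint. Define $\operatorname{trasdim}X=\operatorname{Ord}A(X,d)$, except $\operatorname{trasdim}X=-1$ iff $X$ is bounded. $X$ has asymptotic property $C$ if for every sequence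 of natural numbers $n_1<n_2<\cdots$ there exist $n\in\mathbb N$ and uniformly bounded families $\mathcal U_1,\dots,\mathcal U_n$ such that $\bigcup_{i=1}^n\mathcal U_i$ covers $X$ and each $\mathcal U_i$ is $n_i$-disjoint. *)

theory Defs
  imports "HOL-Analysis.Analysis"
begin

definition Nat1 :: "nat set" where "Nat1 = {n. n \<ge> 1}"

definition Fin :: "'l set \<Rightarrow> 'l set set" where
  "Fin L = {\<sigma>. finite \<sigma> \<and> \<sigma> \<noteq> {} \<and> \<sigma> \<subseteq> L}"

definition deriv :: "'l set \<Rightarrow> 'l set set \<Rightarrow> 'l \<Rightarrow> 'l set set" where
  "deriv L M a = {\<tau>. \<tau> \<in> Fin L \<and> {a} \<union> \<tau> \<in> M \<and> {a} \<inter> \<tau> = {}}"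

text \<open>ord_finite L M means Ord M \<noteq> \<infinity>, i.e. Ord M \<le> \<alpha> for some ordinal \<alpha>.
  By the inductive definition of Ord, this is exactly the least predicate that holds
  for M = {} (Ord M = 0) and holds for M whenever it holds for all M^a, a \<in> L
  (then Ord M \<le> sup (Ord M^a + 1)).\<close>
inductive ord_finite :: "'l set \<Rightarrow> 'l set set \<Rightarrow> bool" for L where
  ord_empty: "M = {} \<Longrightarrow> ord_finite L M"
| ord_step: "(\<forall>a\<in>L. ord_finite L (deriv L M a)) \<Longrightarrow> ord_finite L M"

definition unif_bounded :: "('a \<Rightarrow> 'a \<Rightarrow> real) \<Rightarrow> 'a set set \<Rightarrow> bool" where
  "unif_bounded d \<V> \<longleftrightarrow> (\<exists>C>0. \<forall>A\<in>\<V>. \<forall>x\<in>A. \<forall>y\<in>A. d x y \<le> C)"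

definition r_disjoint :: "('a \<Rightarrow> 'a \<Rightarrow> real) \<Rightarrow> real \<Rightarrow> 'a set set \<Rightarrow> bool" where
  "r_disjoint d r \<V> \<longleftrightarrow>
     (\<forall>A1\<in>\<V>. \<forall>A2\<in>\<V>. A1 \<noteq> A2 \<longrightarrow> (\<forall>x\<in>A1. \<forall>y\<in>A2. d x y \<ge> r))"

definition A_set :: "'a set \<Rightarrow> ('a \<Rightarrow> 'a \<Rightarrow> real) \<Rightarrow> nat set set" where
  "A_set X d = {\<sigma>. \<sigma> \<in> Fin Nat1 \<and>
     \<not> (\<exists>\<V> :: nat \<Rightarrow> 'a set set.
          (\<forall>i\<in>\<sigma>. \<V> i \<subseteq> Pow X \<and> unif_bounded d (\<V> i) \<and> r_disjoint d (real i) (\<V> i))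
          \<and> X \<subseteq> (\<Union>i\<in>\<sigma>. \<Union>(\<V> i)))}"

definition bounded_space :: "'a set \<Rightarrow> ('a \<Rightarrow> 'a \<Rightarrow> real) \<Rightarrow> bool" where
  "bounded_space X d \<longleftrightarrow> (\<exists>C. \<forall>x\<in>X. \<forall>y\<in>X. d x y \<le> C)"

text \<open>trasdim X < \<infinity>: either X is bounded (trasdim = -1) or Ord A(X,d) is an ordinal.\<close>
definition trasdim_finite :: "'a set \<Rightarrow> ('a \<Rightarrow> 'a \<Rightarrow> real) \<Rightarrow> bool" where
  "trasdim_finite X d \<longleftrightarrow> bounded_space X d \<or> ord_finite Nat1 (A_set X d)"

text \<open>Asymptotic property C; the sequence n_1 < n_2 < ... is n 1 < n 2 < ..., families U_1..U_k.\<close>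
definition asymptotic_C :: "'a set \<Rightarrow> ('a \<Rightarrow> 'a \<Rightarrow> real) \<Rightarrow> bool" where
  "asymptotic_C X d \<longleftrightarrow>
     (\<forall>n :: nat \<Rightarrow> nat. strict_mono n \<and> n 1 \<ge> 1 \<longrightarrow>
        (\<exists>k \<ge> 1. \<exists>\<U> :: nat \<Rightarrow> 'a set set.
           (\<forall>i\<in>{1..k}. \<U> i \<subseteq> Pow X \<and> unif_bounded d (\<U> i) \<and> r_disjoint d (real (n i)) (\<U> i))
           \<and> X \<subseteq> (\<Union>i\<in>{1..k}. \<Union>(\<U> i))))"

end

theory Submission
  imports Defs
begin

text \<open>
  Both sides are statements about the family of finite sets of scales that do not admit a
  cover. Ord M < \<infinity> for a hereditary family M means that M has no infinite branch: no
  injective sequence a all of whose initial segments {a 0, ..., a (k - 1)} lie in M. Asymptotic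
  property C says that every increasing sequence of scales has an initial segment that admits a
  cover. Since covers are preserved under enlarging the set of scales, and every injective
  sequence of scales contains the increasing enumeration of its range, these two conditions
  coincide.
\<close>

lemma ord_finite_imp_initial_segment_notin:
  fixes a :: "nat \<Rightarrow> 'l"
  assumes "ord_finite L M" "inj a" "range a \<subseteq> L"
  shows "\<exists>k\<ge>1. a ` {..<k} \<notin> M"
  using assms
proof (induction arbitrary: a rule: ord_finite.induct)
  case (ord_empty M)
  then show ?case by (intro exI[of _ 1]) simp
next
  case (ord_step M)
  have "inj (a \<circ> Suc)"
    using ord_step.prems(1) inj_Suc by (rule inj_compose)
  moreover have "range (a \<circ> Suc) \<subseteq> L"
    using ord_step.prems(2) by auto
  moreover have "\<forall>b :: nat \<Rightarrow> 'l. inj b \<longrightarrow> range b \<subseteq> L \<longrightarrow> (\<exists>k\<ge>1. b ` {..<k} \<notin> deriv L M (a 0))"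
    using ord_step(1) ord_step.prems(2) by blast
  ultimately obtain k where k: "k \<ge> 1" "(a \<circ> Suc) ` {..<k} \<notin> deriv L M (a 0)"
    by blast
  have "(a \<circ> Suc) ` {..<k} \<in> Fin L"
    using k(1) ord_step.prems(2) by (auto simp: Fin_def lessThan_empty_iff)
  moreover have "a 0 \<notin> (a \<circ> Suc) ` {..<k}"
    using ord_step.prems(1) by (auto simp: inj_def)
  moreover have "a ` {..<Suc k} = {a 0} \<union> (a \<circ> Suc) ` {..<k}"
    by (simp add: lessThan_Suc_eq_insert_0 image_image)
  ultimately have "a ` {..<Suc k} \<notin> M"
    using k(2) by (auto simp: deriv_def)
  then show ?case by (intro exI[of _ "Suc k"]) simp
qed

lemma not_ord_finite_deriv:
  assumes "\<not> ord_finite L M"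
  shows "M \<noteq> {}" and "\<exists>x\<in>L. \<not> ord_finite L (deriv L M x)"
  using assms by (auto intro: ord_finite.ord_empty ord_finite.ord_step[rule_format])

lemma not_ord_finite_obtains_branch:
  fixes L :: "'l set"
  assumes "\<not> ord_finite L M"
  obtains a :: "nat \<Rightarrow> 'l" where "inj a" "range a \<subseteq> L" "\<And>m. \<exists>T\<in>M. a ` {..<m} \<subseteq> T"
proof -
  \<comment> \<open>Walk down the iterated derivatives M, M^(a 0), M^(a 0, a 1), ..., always choosing the
    next point so that the derivative still has infinite order.\<close>
  define next_elem where "next_elem N = (SOME x. x \<in> L \<and> \<not> ord_finite L (deriv L N x))" for N
  define Ms where "Ms k = ((\<lambda>N. deriv L N (next_elem N)) ^^ k) M" for k
  define a where "a k = next_elem (Ms k)" for k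
  have Ms_Suc: "Ms (Suc k) = deriv L (Ms k) (a k)" for k
    by (simp add: Ms_def a_def)
  have next_elem: "next_elem N \<in> L \<and> \<not> ord_finite L (deriv L N (next_elem N))"
    if "\<not> ord_finite L N" for N
    unfolding next_elem_def by (rule someI_ex) (use not_ord_finite_deriv(2)[OF that] in blast)
  have not_ord_finite_Ms: "\<not> ord_finite L (Ms k)" for k
    by (induction k) (use assms next_elem in \<open>simp_all add: Ms_def Ms_Suc a_def\<close>)
  have "a k \<in> L" for k
    using next_elem[OF not_ord_finite_Ms] by (simp add: a_def)
  have Ms_nonempty: "Ms k \<noteq> {}" for k
    using not_ord_finite_deriv(1)[OF not_ord_finite_Ms] .
  have Ms_mem: "\<tau> \<union> a ` {..<k} \<in> M \<and> \<tau> \<inter> a ` {..<k} = {}" if "\<tau> \<in> Ms k" for \<tau> k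
    using that
  proof (induction k arbitrary: \<tau>)
    case (Suc k)
    then have "insert (a k) \<tau> \<in> Ms k" "a k \<notin> \<tau>" by (auto simp: Ms_Suc deriv_def)
    from Suc.IH[OF this(1)] this(2) show ?case by (auto simp: lessThan_Suc)
  qed (simp add: Ms_def)
  have "a j \<notin> a ` {..<j}" for j
  proof -
    obtain \<tau> where "\<tau> \<in> Ms (Suc j)" using Ms_nonempty by blast
    then have "insert (a j) \<tau> \<in> Ms j" by (auto simp: Ms_Suc deriv_def)
    from Ms_mem[OF this] show ?thesis by auto
  qed
  then have "inj a"
    by (intro linorder_injI) (metis image_eqI lessThan_iff)
  moreover have "\<exists>T\<in>M. a ` {..<m} \<subseteq> T" for m
    using Ms_nonempty[of m] Ms_mem by blast
  ultimately show ?thesis using that \<open>\<And>k. a k \<in> L\<close> by blast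
qed

lemma ord_finite_iff_initial_segments_notin:
  fixes L :: "'l set"
  assumes hereditary: "\<And>\<sigma> T. T \<in> M \<Longrightarrow> \<sigma> \<in> Fin L \<Longrightarrow> \<sigma> \<subseteq> T \<Longrightarrow> \<sigma> \<in> M"
  shows "ord_finite L M \<longleftrightarrow> (\<forall>a :: nat \<Rightarrow> 'l. inj a \<and> range a \<subseteq> L \<longrightarrow> (\<exists>k\<ge>1. a ` {..<k} \<notin> M))"
proof (intro iffI allI impI)
  assume "\<forall>a :: nat \<Rightarrow> 'l. inj a \<and> range a \<subseteq> L \<longrightarrow> (\<exists>k\<ge>1. a ` {..<k} \<notin> M)"
  show "ord_finite L M"
  proof (rule ccontr)
    assume "\<not> ord_finite L M"
    then obtain a :: "nat \<Rightarrow> 'l" where a: "inj a" "range a \<subseteq> L" "\<And>m. \<exists>T\<in>M. a ` {..<m} \<subseteq> T"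
      using not_ord_finite_obtains_branch by blast
    have "a ` {..<k} \<in> M" if "k \<ge> 1" for k
    proof -
      have "a ` {..<k} \<in> Fin L" using that a(2) by (auto simp: Fin_def lessThan_empty_iff)
      then show ?thesis using a(3) hereditary by blast
    qed
    with a(1,2) \<open>\<forall>a. _\<close> show False by blast
  qed
qed (use ord_finite_imp_initial_segment_notin in blast)

definition bounded_disjoint_family :: "'a set \<Rightarrow> ('a \<Rightarrow> 'a \<Rightarrow> real) \<Rightarrow> nat \<Rightarrow> 'a set set \<Rightarrow> bool"
  where "bounded_disjoint_family X d r \<V> \<longleftrightarrow>
    \<V> \<subseteq> Pow X \<and> unif_bounded d \<V> \<and> r_disjoint d (real r) \<V>"

definition has_disjoint_cover :: "'a set \<Rightarrow> ('a \<Rightarrow> 'a \<Rightarrow> real) \<Rightarrow> nat set \<Rightarrow> bool"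
  where "has_disjoint_cover X d \<sigma> \<longleftrightarrow>
    (\<exists>\<V>. (\<forall>i\<in>\<sigma>. bounded_disjoint_family X d i (\<V> i)) \<and> X \<subseteq> (\<Union>i\<in>\<sigma>. \<Union>(\<V> i)))"

lemma A_set_eq: "A_set X d = {\<sigma> \<in> Fin Nat1. \<not> has_disjoint_cover X d \<sigma>}"
  by (simp add: A_set_def has_disjoint_cover_def bounded_disjoint_family_def)

lemma bounded_disjoint_family_empty [simp]: "bounded_disjoint_family X d r {}"
  by (auto simp: bounded_disjoint_family_def unif_bounded_def r_disjoint_def intro: exI[of _ 1])

lemma has_disjoint_cover_mono:
  assumes "has_disjoint_cover X d \<sigma>" "\<sigma> \<subseteq> \<tau>"
  shows "has_disjoint_cover X d \<tau>"
proof -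
  obtain \<V> where \<V>: "\<forall>i\<in>\<sigma>. bounded_disjoint_family X d i (\<V> i)" "X \<subseteq> (\<Union>i\<in>\<sigma>. \<Union>(\<V> i))"
    using assms(1) by (auto simp: has_disjoint_cover_def)
  let ?\<W> = "\<lambda>i. if i \<in> \<sigma> then \<V> i else {}"
  have "\<forall>i\<in>\<tau>. bounded_disjoint_family X d i (?\<W> i)"
    using \<V>(1) by simp
  moreover have "X \<subseteq> (\<Union>i\<in>\<tau>. \<Union>(?\<W> i))"
    using \<V>(2) assms(2) by fastforce
  ultimately show ?thesis by (auto simp: has_disjoint_cover_def)
qed

lemma has_disjoint_cover_image:
  assumes "inj_on n I"
  shows "has_disjoint_cover X d (n ` I) \<longleftrightarrow>
    (\<exists>\<U>. (\<forall>i\<in>I. bounded_disjoint_family X d (n i) (\<U> i)) \<and> X \<subseteq> (\<Union>i\<in>I. \<Union>(\<U> i)))"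
proof
  assume "has_disjoint_cover X d (n ` I)"
  then obtain \<V> where "\<forall>j\<in>n ` I. bounded_disjoint_family X d j (\<V> j)"
      "X \<subseteq> (\<Union>j\<in>n ` I. \<Union>(\<V> j))"
    by (auto simp: has_disjoint_cover_def)
  then show "\<exists>\<U>. (\<forall>i\<in>I. bounded_disjoint_family X d (n i) (\<U> i)) \<and> X \<subseteq> (\<Union>i\<in>I. \<Union>(\<U> i))"
    by (intro exI[of _ "\<V> \<circ> n"]) auto
next
  assume "\<exists>\<U>. (\<forall>i\<in>I. bounded_disjoint_family X d (n i) (\<U> i)) \<and> X \<subseteq> (\<Union>i\<in>I. \<Union>(\<U> i))"
  then obtain \<U> where "\<forall>i\<in>I. bounded_disjoint_family X d (n i) (\<U> i)" "X \<subseteq> (\<Union>i\<in>I. \<Union>(\<U> i))"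
    by blast
  with assms show "has_disjoint_cover X d (n ` I)"
    unfolding has_disjoint_cover_def by (intro exI[of _ "\<U> \<circ> inv_into I n"]) auto
qed

lemma asymptotic_C_iff_increasing_segments:
  "asymptotic_C X d \<longleftrightarrow>
    (\<forall>n :: nat \<Rightarrow> nat. strict_mono n \<and> n 1 \<ge> 1 \<longrightarrow> (\<exists>k\<ge>1. has_disjoint_cover X d (n ` {1..k})))"
  unfolding asymptotic_C_def
  by (simp add: has_disjoint_cover_image strict_mono_imp_inj_on bounded_disjoint_family_def)

lemma A_set_hereditary:
  assumes "T \<in> A_set X d" "\<sigma> \<in> Fin Nat1" "\<sigma> \<subseteq> T"
  shows "\<sigma> \<in> A_set X d"
  using assms unfolding A_set_eq by (blast intro: has_disjoint_cover_mono)

lemma initial_segment_notin_A_set_iff: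
  fixes a :: "nat \<Rightarrow> nat"
  assumes "range a \<subseteq> Nat1" "k \<ge> 1"
  shows "a ` {..<k} \<notin> A_set X d \<longleftrightarrow> has_disjoint_cover X d (a ` {..<k})"
  using assms by (auto simp: A_set_eq Fin_def lessThan_empty_iff)

lemma bounded_space_imp_has_disjoint_cover:
  assumes "bounded_space X d" "\<sigma> \<noteq> {}"
  shows "has_disjoint_cover X d \<sigma>"
proof -
  obtain C where "\<forall>x\<in>X. \<forall>y\<in>X. d x y \<le> C"
    using assms(1) by (auto simp: bounded_space_def)
  then have "unif_bounded d {X}"
    unfolding unif_bounded_def by (intro exI[of _ "max C 1"]) (auto intro: max.coboundedI1)
  then have "bounded_disjoint_family X d i {X}" for i
    by (simp add: bounded_disjoint_family_def r_disjoint_def)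
  moreover obtain i where "i \<in> \<sigma>" using assms(2) by blast
  ultimately show ?thesis
    unfolding has_disjoint_cover_def
    by (intro exI[of _ "\<lambda>j. if j = i then {X} else {}"]) auto
qed

lemma trasdim_finite_iff_ord_finite: "trasdim_finite X d \<longleftrightarrow> ord_finite Nat1 (A_set X d)"
proof -
  have "A_set X d = {}" if "bounded_space X d"
    using bounded_space_imp_has_disjoint_cover[OF that] by (auto simp: A_set_eq Fin_def)
  then show ?thesis
    unfolding trasdim_finite_def using ord_finite.ord_empty by blast
qed

lemma finite_subset_range_imp_initial_segment:
  fixes a :: "nat \<Rightarrow> 'a"
  assumes "finite S" "S \<subseteq> range a"
  obtains m where "S \<subseteq> a ` {..<m}"
proof -
  obtain C where "finite C" "S = a ` C"
    using finite_subset_image[OF assms] by blast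
  with finite_nat_bounded[of C] that show ?thesis by blast
qed

lemma increasing_segments_iff_injective_segments:
  fixes Q :: "nat set \<Rightarrow> bool"
  assumes Q_mono: "\<And>\<sigma> \<tau>. Q \<sigma> \<Longrightarrow> \<sigma> \<subseteq> \<tau> \<Longrightarrow> Q \<tau>"
  shows "(\<forall>n :: nat \<Rightarrow> nat. strict_mono n \<and> n 1 \<ge> 1 \<longrightarrow> (\<exists>k\<ge>1. Q (n ` {1..k}))) \<longleftrightarrow>
    (\<forall>a :: nat \<Rightarrow> nat. inj a \<and> range a \<subseteq> Nat1 \<longrightarrow> (\<exists>k\<ge>1. Q (a ` {..<k})))"
proof (intro iffI allI impI)
  fix a :: "nat \<Rightarrow> nat"
  assume increasing: "\<forall>n :: nat \<Rightarrow> nat. strict_mono n \<and> n 1 \<ge> 1 \<longrightarrow> (\<exists>k\<ge>1. Q (n ` {1..k}))"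
    and "inj a \<and> range a \<subseteq> Nat1"
  then have "infinite (range a)" by (blast dest: range_inj_infinite)
  define n where "n = enumerate (range a)"
  have "strict_mono n" "range n = range a"
    using \<open>infinite (range a)\<close> by (simp_all add: n_def strict_mono_enumerate range_enumerate)
  moreover from \<open>strict_mono n\<close> have "n 1 \<ge> 1"
    using strict_monoD[of n 0 1] by simp
  ultimately obtain k where "k \<ge> 1" "Q (n ` {1..k})" using increasing by blast
  moreover obtain m where m: "n ` {1..k} \<subseteq> a ` {..<m}"
    by (rule finite_subset_range_imp_initial_segment[of "n ` {1..k}" a])
      (use \<open>range n = range a\<close> in auto)
  moreover have "m \<ge> 1"
  proof -
    have "n 1 \<in> a ` {..<m}" using m \<open>k \<ge> 1\<close> by auto
    then show ?thesis by (cases m) auto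
  qed
  ultimately show "\<exists>k\<ge>1. Q (a ` {..<k})" using Q_mono by blast
next
  fix n :: "nat \<Rightarrow> nat"
  assume injective: "\<forall>a :: nat \<Rightarrow> nat. inj a \<and> range a \<subseteq> Nat1 \<longrightarrow> (\<exists>k\<ge>1. Q (a ` {..<k}))"
    and n: "strict_mono n \<and> n 1 \<ge> 1"
  have "inj (n \<circ> Suc)"
    using n by (meson inj_Suc inj_compose strict_mono_imp_inj_on)
  moreover have "range (n \<circ> Suc) \<subseteq> Nat1"
  proof -
    have "n 1 \<le> n (Suc i)" for i using n by (simp add: strict_mono_less_eq)
    with n show ?thesis by (auto simp: Nat1_def intro: le_trans)
  qed
  ultimately have "\<exists>k\<ge>1. Q ((n \<circ> Suc) ` {..<k})"
    using injective by blast
  then show "\<exists>k\<ge>1. Q (n ` {1..k})"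
    by (simp only: image_comp[symmetric] image_Suc_lessThan)
qed

theorem proposition1:
  assumes "Metric_space X d"
  shows "asymptotic_C X d \<longleftrightarrow> trasdim_finite X d"
proof -
  have "asymptotic_C X d \<longleftrightarrow>
      (\<forall>a :: nat \<Rightarrow> nat. inj a \<and> range a \<subseteq> Nat1 \<longrightarrow> (\<exists>k\<ge>1. has_disjoint_cover X d (a ` {..<k})))"
    by (simp only: asymptotic_C_iff_increasing_segments
        increasing_segments_iff_injective_segments[of "has_disjoint_cover X d", OF has_disjoint_cover_mono])
  also have "\<dots> \<longleftrightarrow> (\<forall>a :: nat \<Rightarrow> nat. inj a \<and> range a \<subseteq> Nat1 \<longrightarrow> (\<exists>k\<ge>1. a ` {..<k} \<notin> A_set X d))"
    by (intro all_cong ex_cong) (use initial_segment_notin_A_set_iff in blast)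
  also have "\<dots> \<longleftrightarrow> ord_finite Nat1 (A_set X d)"
    by (rule ord_finite_iff_initial_segments_notin[symmetric]) (rule A_set_hereditary)
  also have "\<dots> \<longleftrightarrow> trasdim_finite X d"
    by (rule trasdim_finite_iff_ord_finite[symmetric])
  finally show ?thesis .
qed

end
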